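(* Under the hypotheses of Theorem 5.2 ($\phi\in\Phi$; $\nu,\lambda>0$; $f$ proper lsc and Lipschitz relative to the closed set $\Omega\subseteq\mathbb{R}^{n_1\times n_2}\times\mathbb{R}^{n_1\times n_2}$ with constant $L_f$; $(X^\varrho,Y^\varrho)\in\Omega$ for all $(X,Y)\in\Omega,\varrho>0$; $\min_{(X,Y)\in\Omega}\{\nu f(X,Y)+\mathrm{rank}(X)+\lambda\|Y\|_0\}$ has a nonempty global solution set), for every $\varrho>\frac{\phi'_-(1)(1-t^* )\nu L_f}{\min(1,\lambda)(1-t_0)}$ that problem has the same global optimal solution set as $$\textstyle\min_{(X,Y)\in\Omega}\Big\{\nu f(X,Y)+\varrho\|X\|_*-\sum_{i=1}^{n_1}\psi^*(\varrho\sigma_i(X))+\varrho\lambda\|Y\|_1-\lambda\sum_{i=1}^{n_1}\sum_{j=1}^{n_2}\psi^*(\varrho|Y_{ij}|)\Big\}.$$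
   Context: $\Phi$ is the family of proper lsc functions $\phi:\mathbb{R}\to(-\infty,+\infty]$ with $\mathrm{int}(\mathrm{dom}\,\phi)\supseteq[0,1]$, convex on $[0,1]$, such that $\min_{t\in[0,1]}\phi(t)=0$ is attained at a (fixed) point $t^*\in[0,1)$, and $\phi(1)=1$; $\phi'_-(1)$ the left derivative at $1$. $\psi(t)=\phi(t)$ on $[0,1]$, $+\infty$ otherwise; $\psi^*$ its convex conjugate; $t_0\in[0,1)$ a point with $\frac{1}{1-t^*}\in\partial\psi(t_0)$. $X^\varrho:=U[\mathrm{Diag}(x^\varrho)\ 0]V^T$ for an SVD $X=U[\mathrm{Diag}(\sigma(X))\ 0]V^T$, $x^\varrho_i=\sigma_i(X)$ if $\varrho\sigma_i(X)>\phi'_-(1)$ else $0$; $Y^\varrho_{ij}=Y_{ij}$ if $\varrho|Y_{ij}|>\phi'_-(1)$ else $0$. Norms: nuclear $\|\cdot\|_*$, entrywise $\|\cdot\|_1$, $\|\cdot\|_0$ counts nonzeros. Lipschitz w.r.t. Frobenius norm. *)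

theory Defs
  imports "HOL-Analysis.Analysis" "HOL-Library.Multiset"
begin

definition lsc_fun :: "('a::topological_space \<Rightarrow> ereal) \<Rightarrow> bool" where
  "lsc_fun g \<longleftrightarrow> (\<forall>x. g x \<le> Liminf (at x) g)"

definition proper_fun :: "('a \<Rightarrow> ereal) \<Rightarrow> bool" where
  "proper_fun g \<longleftrightarrow> (\<forall>x. g x \<noteq> -\<infinity>) \<and> (\<exists>x. g x \<noteq> \<infinity>)"

definition in_Phi :: "(real \<Rightarrow> ereal) \<Rightarrow> real \<Rightarrow> bool" where
  "in_Phi phi tstar \<longleftrightarrow>
     proper_fun phi \<and> lsc_fun phi \<and>
     {0..1} \<subseteq> interior {x. phi x \<noteq> \<infinity>} \<and>
     convex_on {0..1} (\<lambda>t. real_of_ereal (phi t)) \<and>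
     0 \<le> tstar \<and> tstar < 1 \<and> phi tstar = 0 \<and> (\<forall>t\<in>{0..1}. phi tstar \<le> phi t) \<and>
     phi 1 = 1"

definition psi :: "(real \<Rightarrow> ereal) \<Rightarrow> real \<Rightarrow> ereal" where
  "psi phi t = (if t \<in> {0..1} then phi t else \<infinity>)"

definition psi_conj :: "(real \<Rightarrow> ereal) \<Rightarrow> real \<Rightarrow> ereal" where
  "psi_conj phi s = (SUP t. ereal (s * t) - psi phi t)"

definition subdiff_psi :: "(real \<Rightarrow> ereal) \<Rightarrow> real \<Rightarrow> real set" where
  "subdiff_psi phi t0 = {g. psi phi t0 \<noteq> \<infinity> \<and>
      (\<forall>t. psi phi t \<ge> psi phi t0 + ereal (g * (t - t0)))}"

text \<open>Matrices in R^(n1 x n2) are real^n2^n1 (rows indexed by 'n1); the norm of this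
  type is the Frobenius norm.  A rectangular diagonal matrix [Diag(s) 0] is represented,
  up to a column permutation (absorbed into V), by an injection e from row to column indices.\<close>
definition rdiag :: "('n1 \<Rightarrow> 'n2) \<Rightarrow> ('n1 \<Rightarrow> real) \<Rightarrow> real^'n2^'n1" where
  "rdiag e s = (\<chi> i j. if j = e i then s i else 0)"

definition is_svd :: "real^'n2^'n1 \<Rightarrow> real^'n1^'n1 \<Rightarrow> ('n1 \<Rightarrow> 'n2) \<Rightarrow> ('n1 \<Rightarrow> real)
                      \<Rightarrow> real^'n2^'n2 \<Rightarrow> bool" where
  "is_svd X U e s V \<longleftrightarrow> orthogonal_matrix U \<and> orthogonal_matrix V \<and> inj e \<and>
      (\<forall>i. 0 \<le> s i) \<and> X = U ** rdiag e s ** transpose V"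

definition sing_vals :: "real^'n2^'n1 \<Rightarrow> real multiset" where
  "sing_vals X = (THE M. \<exists>U e s V. is_svd X U e s V \<and> M = image_mset s (mset_set UNIV))"

definition nuc_norm :: "real^'n2^'n1 \<Rightarrow> real" where
  "nuc_norm X = sum_mset (sing_vals X)"

text \<open>X^rho with threshold c = phi'_-(1).\<close>
definition trunc_mat :: "real \<Rightarrow> real \<Rightarrow> real^'n2^'n1 \<Rightarrow> real^'n2^'n1" where
  "trunc_mat c rho X = (THE Z. \<exists>U e s V. is_svd X U e s V \<and>
      Z = U ** rdiag e (\<lambda>i. if rho * s i > c then s i else 0) ** transpose V)"

definition trunc_ent :: "real \<Rightarrow> real \<Rightarrow> real^'n2^'n1 \<Rightarrow> real^'n2^'n1" where
  "trunc_ent c rho Y = (\<chi> i j. if rho * \<bar>Y $ i $ j\<bar> > c then Y $ i $ j else 0)"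

definition l1_norm :: "real^'n2^'n1 \<Rightarrow> real" where
  "l1_norm Y = (\<Sum>i\<in>UNIV. \<Sum>j\<in>UNIV. \<bar>Y $ i $ j\<bar>)"

definition l0_norm :: "real^'n2^'n1 \<Rightarrow> nat" where
  "l0_norm Y = card {(i, j). Y $ i $ j \<noteq> 0}"

definition argmin_on :: "'a set \<Rightarrow> ('a \<Rightarrow> ereal) \<Rightarrow> 'a set" where
  "argmin_on S F = {p \<in> S. \<forall>q\<in>S. F p \<le> F q}"

end

theory Submission
  imports Defs
begin

text \<open>Write H(a) = a - psi*(a). Then H(0) = 0, H \<le> 1, H = 1 on [phi'_-(1), \<infinity>), and
  H(a) \<ge> a / phi'_-(1) below that point (tangent of phi at 1 and phi \<ge> 0). With an SVD of X the
  penalty objective reads nu f + \<Sum> H(rho sigma_i) + lam \<Sum> H(rho |Y_ij|), so it lies below the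
  rank objective and agrees with it wherever every nonzero singular value and entry is at least
  phi'_-(1)/rho. Hard thresholding at phi'_-(1)/rho moves any feasible point to such a point; it
  lowers the penalty part by at least rho min(1, lam)/phi'_-(1) times the removed mass, while f
  changes by at most L_f times that mass (the removed mass bounds the Frobenius distance). For the
  given rho (which, as t* \<le> t0, exceeds phi'_-(1) nu L_f / min(1, lam)) the penalty objective
  therefore strictly decreases unless the point is fixed, and an
  exact penalty argument identifies the two solution sets.\<close>

section \<open>Spectral theorem for symmetric matrices\<close>

definition diag_mat :: "('n::finite \<Rightarrow> real) \<Rightarrow> real^'n^'n" where
  "diag_mat c = (\<chi> i j. if i = j then c i else 0)"

lemma matrix_mul_diag_mat_right: "((M::real^'n^'m) ** diag_mat c) $ i $ j = M $ i $ j * c j"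
  by (simp add: matrix_matrix_mult_def diag_mat_def if_distrib if_distribR cong: if_cong)

lemma matrix_mul_diag_mat_left: "(diag_mat c ** (M::real^'m^'n)) $ i $ j = c i * M $ i $ j"
  by (simp add: matrix_matrix_mult_def diag_mat_def if_distrib if_distribR cong: if_cong)

lemma inner_matrix_vector_symmetric:
  assumes "transpose A = A"
  shows "inner x ((A::real^'n^'n) *v y) = inner (A *v x) y"
  by (metis assms dot_lmul_matrix transpose_matrix_vector)

lemma quadratic_nonneg_imp_linear_coeff_zero:
  fixes a c :: real
  assumes nonneg: "\<And>t. 0 \<le> 2 * t * c + t^2 * a" and "a \<ge> 0"
  shows "c = 0"
proof (rule ccontr)
  assume "c \<noteq> 0"
  define t where "t = - c / (a + 1)"
  have "t * (a + 1) = - c" using \<open>a \<ge> 0\<close> by (simp add: t_def)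
  have "(a + 1)^2 * (2 * t * c + t^2 * a) = 2 * c * (a + 1) * (t * (a + 1)) + a * (t * (a + 1))^2"
    by (simp add: algebra_simps power2_eq_square)
  also have "\<dots> = 2 * c * (a + 1) * (- c) + a * (- c)^2"
    by (simp only: \<open>t * (a + 1) = - c\<close>)
  also have "\<dots> = - (c^2 * (a + 2))"
    by (simp add: algebra_simps power2_eq_square)
  also have "\<dots> < 0" using \<open>a \<ge> 0\<close> \<open>c \<noteq> 0\<close> by simp
  finally have "(a + 1)^2 * (2 * t * c + t^2 * a) < 0" .
  moreover have "0 \<le> (a + 1)^2 * (2 * t * c + t^2 * a)" using nonneg[of t] by simp
  ultimately show False by simp
qed

text \<open>A maximiser of the quadratic form on the unit sphere of S is an eigenvector: perturbing it
  within S cannot increase the Rayleigh quotient, so the first-order term must vanish.\<close>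
lemma symmetric_matrix_eigenvector_in_invariant_subspace:
  fixes A :: "real^'n^'n"
  assumes sym: "transpose A = A" and S: "subspace S" and ne: "S \<noteq> {0}"
    and inv: "\<And>x. x \<in> S \<Longrightarrow> A *v x \<in> S"
  obtains v \<mu> where "v \<in> S" "norm v = 1" "A *v v = \<mu> *\<^sub>R v"
proof -
  let ?K = "S \<inter> sphere 0 1"
  let ?q = "\<lambda>x. inner x (A *v x)"
  have compact: "compact ?K"
    using closed_subspace[OF S] compact_sphere by (simp add: closed_Int_compact)
  obtain x where "x \<in> S" "x \<noteq> 0" using ne subspace_0[OF S] by auto
  then have "x /\<^sub>R norm x \<in> ?K" using subspace_scale[OF S] by auto
  then have nonempty: "?K \<noteq> {}" by blast
  have "continuous_on ?K ?q"
    by (intro continuous_intros linear_continuous_on matrix_vector_mul_bounded_linear)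
  then obtain v where vK: "v \<in> ?K" and vmax: "\<And>y. y \<in> ?K \<Longrightarrow> ?q y \<le> ?q v"
    using continuous_attains_sup[OF compact nonempty] by blast
  define \<mu> where "\<mu> = ?q v"
  have vS: "v \<in> S" and nv: "norm v = 1" using vK by auto
  have vv: "inner v v = 1" using nv by (simp add: power2_norm_eq_inner[symmetric])
  have rayleigh: "?q y \<le> \<mu> * (norm y)^2" if "y \<in> S" for y
  proof (cases "y = 0")
    case False
    have "y /\<^sub>R norm y \<in> ?K" using subspace_scale[OF S that] False by auto
    then have "?q (y /\<^sub>R norm y) \<le> \<mu>" using vmax \<mu>_def by blast
    moreover have "?q (y /\<^sub>R norm y) = ?q y / (norm y)^2"
      by (simp add: matrix_vector_mult_scaleR power2_eq_square divide_inverse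
          mult_ac)
    ultimately have "?q y / (norm y)^2 \<le> \<mu>" by simp
    then show ?thesis using False by (simp add: pos_divide_le_eq)
  qed simp
  have orth: "inner w (\<mu> *\<^sub>R v - A *v v) = 0" if wS: "w \<in> S" for w
  proof (rule quadratic_nonneg_imp_linear_coeff_zero)
    show "0 \<le> \<mu> * (norm w)^2 - ?q w" using rayleigh[OF wS] by simp
    fix t
    have "inner v (A *v w) = inner w (A *v v)"
      using inner_matrix_vector_symmetric[OF sym, of v w] by (simp add: inner_commute)
    then have "?q (v + t *\<^sub>R w) = ?q v + 2 * t * inner w (A *v v) + t^2 * ?q w"
      by (simp add: power2_eq_square algebra_simps)
    moreover have "(norm (v + t *\<^sub>R w))^2 = 1 + 2 * t * inner v w + t^2 * (norm w)^2"
      unfolding power2_norm_eq_inner using vv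
      by (simp add: inner_commute algebra_simps power2_eq_square)
    moreover have "v + t *\<^sub>R w \<in> S" using S vS wS by (simp add: subspace_add subspace_scale)
    ultimately show "0 \<le> 2 * t * inner w (\<mu> *\<^sub>R v - A *v v) + t^2 * (\<mu> * (norm w)^2 - ?q w)"
      using rayleigh[of "v + t *\<^sub>R w"] \<mu>_def
      by (simp add: inner_commute algebra_simps)
  qed
  have "\<mu> *\<^sub>R v - A *v v \<in> S" using S vS inv[OF vS] by (simp add: subspace_diff subspace_scale)
  from orth[OF this] have "A *v v = \<mu> *\<^sub>R v" by simp
  with vS nv show ?thesis by (rule that)
qed

lemma symmetric_matrix_orthonormal_eigenbasis:
  fixes A :: "real^'n^'n"
  assumes sym: "transpose A = A"
  shows "subspace S \<Longrightarrow> (\<And>x. x \<in> S \<Longrightarrow> A *v x \<in> S) \<Longrightarrow>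
    \<exists>B. B \<subseteq> S \<and> pairwise orthogonal B \<and> (\<forall>x\<in>B. norm x = 1) \<and>
        (\<forall>x\<in>B. \<exists>\<mu>. A *v x = \<mu> *\<^sub>R x) \<and> card B = dim S \<and> finite B"
proof (induction "dim S" arbitrary: S rule: less_induct)
  case less
  show ?case
  proof (cases "S = {0}")
    case True
    then show ?thesis by (intro exI[of _ "{}"]) auto
  next
    case False
    obtain v \<mu> where vS: "v \<in> S" and nv: "norm v = 1" and Av: "A *v v = \<mu> *\<^sub>R v"
      using symmetric_matrix_eigenvector_in_invariant_subspace[OF sym less.prems(1) False less.prems(2)]
      by blast
    have vv: "inner v v = 1" using nv by (simp add: power2_norm_eq_inner[symmetric])
    define S' where "S' = S \<inter> {x. inner v x = 0}"
    have sub': "subspace S'" unfolding S'_def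
      by (intro subspace_inter less.prems(1) subspace_hyperplane)
    have inv': "A *v x \<in> S'" if "x \<in> S'" for x
    proof -
      have "inner v (A *v x) = inner (A *v v) x" by (rule inner_matrix_vector_symmetric[OF sym])
      also have "\<dots> = 0" using that Av by (simp add: S'_def)
      finally show ?thesis using that less.prems(2) by (simp add: S'_def)
    qed
    have S'S: "S' \<subseteq> S" by (auto simp: S'_def)
    have "S \<subseteq> span (insert v S')"
    proof
      fix x assume xS: "x \<in> S"
      have "x - (inner v x) *\<^sub>R v \<in> S'"
        using xS vS less.prems(1) vv by (simp add: S'_def subspace_diff subspace_scale inner_diff_right)
      then have "(x - (inner v x) *\<^sub>R v) + (inner v x) *\<^sub>R v \<in> span (insert v S')"
        by (intro span_add) (simp_all add: span_base span_mul)
      then show "x \<in> span (insert v S')" by simp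
    qed
    moreover have "span (insert v S') \<subseteq> S"
      using vS S'S less.prems(1) by (simp add: span_minimal)
    ultimately have "S = span (insert v S')" by blast
    moreover have "v \<notin> span S'" using sub' vv by (simp add: span_eq_iff[THEN iffD2] S'_def)
    ultimately have dimS: "dim S = dim S' + 1" by (metis dim_insert dim_span)
    then obtain B' where B': "B' \<subseteq> S'" "pairwise orthogonal B'" "\<forall>x\<in>B'. norm x = 1"
        "\<forall>x\<in>B'. \<exists>\<mu>. A *v x = \<mu> *\<^sub>R x" "card B' = dim S'" "finite B'"
      using less.hyps[OF _ sub' inv'] by auto
    have "v \<notin> B'" using B'(1) vv by (auto simp: S'_def)
    show ?thesis
    proof (intro exI[of _ "insert v B'"] conjI)
      show "insert v B' \<subseteq> S" using vS B'(1) S'S by auto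
      show "pairwise orthogonal (insert v B')"
        using B'(1,2) by (auto simp: pairwise_insert orthogonal_def S'_def inner_commute)
      show "card (insert v B') = dim S" using \<open>v \<notin> B'\<close> B'(5,6) dimS by simp
    qed (use nv Av B' in auto)
  qed
qed

lemma symmetric_matrix_orthogonal_diagonalization:
  fixes A :: "real^'n^'n"
  assumes sym: "transpose A = A"
  obtains U c where "orthogonal_matrix U" "A = U ** diag_mat c ** transpose U"
proof -
  obtain B where B: "pairwise orthogonal B" "\<forall>x\<in>B. norm x = 1"
     "\<forall>x\<in>B. \<exists>\<mu>. A *v x = \<mu> *\<^sub>R x" "card B = CARD('n)" "finite B"
    using symmetric_matrix_orthonormal_eigenbasis[OF sym, of UNIV] by auto
  then obtain f where f: "bij_betw f (UNIV::'n set) B"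
    by (metis finite_class.finite_UNIV finite_same_card_bij)
  have fB: "f j \<in> B" for j using f by (auto simp: bij_betw_def)
  define U where "U = (\<chi> i j. f j $ i)"
  define c where "c = (\<lambda>j. SOME \<mu>. A *v f j = \<mu> *\<^sub>R f j)"
  have eig: "A *v f j = c j *\<^sub>R f j" for j
    unfolding c_def using B(3) fB[of j] by (metis (mono_tags, lifting) someI_ex)
  have [simp]: "\<And>i. norm (f i) = 1" using fB B(2) by blast
  have [simp]: "\<And>i j. i \<noteq> j \<Longrightarrow> orthogonal (f i) (f j)"
    using B(1) f by (auto simp: pairwise_def bij_betw_def inj_on_def)
  have oU: "orthogonal_matrix U"
    by (simp add: U_def orthogonal_matrix_orthonormal_columns column_def)
  have "(A ** U) $ i $ j = (U ** diag_mat c) $ i $ j" for i j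
  proof -
    have "(A ** U) $ i $ j = (A *v f j) $ i"
      by (simp add: matrix_matrix_mult_def matrix_vector_mult_def U_def)
    then show ?thesis by (simp add: eig matrix_mul_diag_mat_right U_def mult.commute)
  qed
  then have AU: "A ** U = U ** diag_mat c" by (simp add: vec_eq_iff)
  have "A = A ** U ** transpose U"
    using oU by (simp add: orthogonal_matrix_def matrix_mul_assoc[symmetric])
  also have "\<dots> = U ** diag_mat c ** transpose U" by (simp add: AU)
  finally show ?thesis using that oU by blast
qed

section \<open>Singular value decomposition\<close>

lemma orthonormal_basis_extension:
  fixes S :: "'a::euclidean_space set"
  assumes orth: "pairwise orthogonal S" and unit: "\<forall>x\<in>S. norm x = 1"
  obtains B where "S \<subseteq> B" "pairwise orthogonal B" "\<forall>x\<in>B. norm x = 1" "finite B"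
    "card B = DIM('a)"
proof -
  obtain U where U: "U \<inter> insert 0 S = {}" "pairwise orthogonal (S \<union> U)"
      "span (S \<union> U) = span (S \<union> UNIV)"
    using orthogonal_extension_strong[OF orth] .
  let ?T = "S \<union> U" and ?nrm = "\<lambda>x. x /\<^sub>R norm x"
  have "0 \<notin> ?T" using U(1) unit by auto
  then have indep: "independent ?T" using U(2) by (simp add: pairwise_orthogonal_independent)
  then have "finite ?T" by (rule independent_imp_finite)
  have "span ?T = UNIV" using U(3) by simp
  then have "card ?T = DIM('a)" using indep by (metis dim_UNIV indep_card_eq_dim_span)
  have inj: "inj_on ?nrm ?T"
    unfolding inj_on_def
    by (metis (full_types) U(2) \<open>0 \<notin> ?T\<close> inverse_nonzero_iff_nonzero norm_eq_zero
        orthogonal_scaleR orthogonal_self pairwise_def)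
  show thesis
  proof
    show "S \<subseteq> ?nrm ` ?T"
    proof
      fix x assume "x \<in> S"
      then have "x = ?nrm x" "x \<in> ?T" using unit by auto
      then show "x \<in> ?nrm ` ?T" by (rule image_eqI)
    qed
    show "pairwise orthogonal (?nrm ` ?T)"
      unfolding pairwise_def
    proof clarify
      fix x y assume "x \<in> ?T" "y \<in> ?T" "?nrm x \<noteq> ?nrm y"
      then have "orthogonal x y" using U(2) by (metis pairwise_def)
      then show "orthogonal (?nrm x) (?nrm y)" by (simp add: orthogonal_def)
    qed
    show "\<forall>x\<in>?nrm ` ?T. norm x = 1"
    proof
      fix y assume "y \<in> ?nrm ` ?T"
      then obtain x where "x \<in> ?T" "y = ?nrm x" by blast
      moreover from this have "x \<noteq> 0" using \<open>0 \<notin> ?T\<close> by blast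
      ultimately show "norm y = 1" by simp
    qed
    show "finite (?nrm ` ?T)" using \<open>finite ?T\<close> by simp
    show "card (?nrm ` ?T) = DIM('a)" using inj \<open>card ?T = DIM('a)\<close> by (simp add: card_image)
  qed
qed

lemma inj_on_extend_to_inj:
  fixes h :: "'a::finite \<Rightarrow> 'b::finite"
  assumes inj: "inj_on h K" and card: "CARD('a) \<le> CARD('b)"
  obtains e where "inj e" "\<And>i. i \<in> K \<Longrightarrow> e i = h i"
proof -
  have "card (UNIV - K) = CARD('a) - card K" by (simp add: card_Diff_subset)
  moreover have "card (UNIV - h ` K) = CARD('b) - card K"
    using inj by (simp add: card_Diff_subset card_image)
  ultimately have "card (UNIV - K) \<le> card (UNIV - h ` K)" using card by simp
  then obtain h' where h': "h' ` (UNIV - K) \<subseteq> UNIV - h ` K" "inj_on h' (UNIV - K)"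
    using card_le_inj[of "UNIV - K" "UNIV - h ` K"] by auto
  define e where "e i = (if i \<in> K then h i else h' i)" for i
  have "inj e"
  proof (rule injI)
    fix i j assume eq: "e i = e j"
    show "i = j"
    proof (cases "i \<in> K"; cases "j \<in> K")
      assume "i \<in> K" "j \<in> K" then show ?thesis using eq inj by (simp add: e_def inj_on_def)
    next
      assume "i \<notin> K" "j \<notin> K" then show ?thesis using eq h'(2) by (simp add: e_def inj_on_def)
    next
      assume "i \<in> K" "j \<notin> K" then show ?thesis using eq h'(1) by (auto simp: e_def)
    next
      assume "i \<notin> K" "j \<in> K" then show ?thesis using eq h'(1) by (force simp: e_def)
    qed
  qed
  then show thesis by (rule that) (simp add: e_def)
qed

lemma matrix_mul_transpose_entry: "((M::real^'n^'m) ** transpose M) $ i $ j = inner (M $ i) (M $ j)"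
  by (simp add: matrix_matrix_mult_def transpose_def inner_vec_def)

text \<open>A matrix with pairwise orthogonal rows is [Diag(s) 0] V^T, with s the row norms: the
  normalised nonzero rows are extended to an orthonormal basis, which forms the columns of V.\<close>
lemma orthogonal_rows_imp_rdiag_decomposition:
  fixes M :: "real^'n2^'n1"
  assumes dims: "CARD('n1) \<le> CARD('n2)"
    and orows: "\<And>i j. i \<noteq> j \<Longrightarrow> inner (M $ i) (M $ j) = 0"
  obtains e V where "orthogonal_matrix V" "inj e" "M = rdiag e (\<lambda>i. norm (M $ i)) ** transpose V"
proof -
  define s where "s i = norm (M $ i)" for i
  define K where "K = {i. M $ i \<noteq> 0}"
  define nr where "nr i = M $ i /\<^sub>R s i" for i
  have nr1: "norm (nr i) = 1" if "i \<in> K" for i using that by (simp add: nr_def s_def K_def)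
  have nrorth: "inner (nr i) (nr j) = 0" if "i \<noteq> j" for i j
    using orows[OF that] by (simp add: nr_def)
  have nrinj: "inj_on nr K"
  proof (rule inj_onI)
    fix i j assume "i \<in> K" "j \<in> K" "nr i = nr j"
    then show "i = j" using nrorth[of i j] nr1[of i] by (metis inner_eq_zero_iff norm_zero zero_neq_one)
  qed
  have "pairwise orthogonal (nr ` K)"
    unfolding pairwise_def orthogonal_def by (auto intro: nrorth)
  moreover have "\<forall>x\<in>nr ` K. norm x = 1" using nr1 by auto
  ultimately obtain B where B: "nr ` K \<subseteq> B" "pairwise orthogonal B" "\<forall>x\<in>B. norm x = 1"
      "finite B" "card B = DIM(real^'n2)"
    by (rule orthonormal_basis_extension)
  then have "card B = CARD('n2)" by simp
  with \<open>finite B\<close> obtain g where g: "bij_betw g (UNIV::'n2 set) B"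
    using finite_same_card_bij[of "UNIV::'n2 set" B] by auto
  define V where "V = (\<chi> a b. g b $ a)"
  have "norm (g i) = 1" for i using g B(3) by (auto simp: bij_betw_def)
  moreover have "orthogonal (g i) (g j)" if "i \<noteq> j" for i j
    using B(2) g that by (auto simp: pairwise_def bij_betw_def inj_on_def)
  ultimately have oV: "orthogonal_matrix V"
    by (simp add: V_def orthogonal_matrix_orthonormal_columns column_def)
  define e1 where "e1 i = inv_into UNIV g (nr i)" for i
  have ge1: "g (e1 i) = nr i" if "i \<in> K" for i
    using that B(1) g unfolding e1_def by (metis bij_betw_inv_into_right image_subset_iff)
  have "inj_on e1 K"
  proof (rule inj_onI)
    fix i j assume "i \<in> K" "j \<in> K" "e1 i = e1 j"
    then show "i = j" using ge1 nrinj by (metis inj_onD)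
  qed
  then obtain e where e: "inj e" "\<And>i. i \<in> K \<Longrightarrow> e i = e1 i"
    using inj_on_extend_to_inj[OF _ dims] by metis
  have "M $ i $ b = (rdiag e s ** transpose V) $ i $ b" for i b
  proof -
    have "(rdiag e s ** transpose V) $ i $ b = s i * g (e i) $ b"
      by (simp add: matrix_matrix_mult_def rdiag_def transpose_def V_def if_distrib if_distribR
          cong: if_cong)
    also have "\<dots> = M $ i $ b"
      using ge1[of i] e(2)[of i] by (cases "i \<in> K") (auto simp: nr_def s_def K_def)
    finally show ?thesis by simp
  qed
  then have "M = rdiag e s ** transpose V" by (simp add: vec_eq_iff)
  with oV e(1) show thesis unfolding s_def by (rule that)
qed

lemma svd_exists:
  fixes X :: "real^'n2^'n1"
  assumes dims: "CARD('n1) \<le> CARD('n2)"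
  obtains U e s V where "is_svd X U e s V"
proof -
  have "transpose (X ** transpose X) = X ** transpose X"
    by (simp only: matrix_transpose_mul transpose_transpose)
  then obtain U c where oU: "orthogonal_matrix U" and XX: "X ** transpose X = U ** diag_mat c ** transpose U"
    by (rule symmetric_matrix_orthogonal_diagonalization)
  have UtU: "transpose U ** U = mat 1" and UUt: "U ** transpose U = mat 1"
    using oU by (auto simp: orthogonal_matrix_def)
  define M where "M = transpose U ** X"
  have "M ** transpose M = transpose U ** (X ** transpose X) ** U"
    by (simp only: M_def matrix_transpose_mul transpose_transpose matrix_mul_assoc)
  also have "\<dots> = (transpose U ** U) ** diag_mat c ** (transpose U ** U)"
    by (simp only: XX matrix_mul_assoc)
  finally have MM: "M ** transpose M = diag_mat c" by (simp add: UtU)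
  have "inner (M $ i) (M $ j) = 0" if "i \<noteq> j" for i j
    using arg_cong[OF MM, of "\<lambda>Z. Z $ i $ j"] that
    by (simp add: matrix_mul_transpose_entry diag_mat_def)
  then obtain e V where oV: "orthogonal_matrix V" and e: "inj e"
    and M: "M = rdiag e (\<lambda>i. norm (M $ i)) ** transpose V"
    by (rule orthogonal_rows_imp_rdiag_decomposition[OF dims])
  have "X = U ** M" by (simp add: M_def matrix_mul_assoc UUt)
  also have "\<dots> = U ** rdiag e (\<lambda>i. norm (M $ i)) ** transpose V"
    by (subst M) (simp only: matrix_mul_assoc)
  finally have "X = U ** rdiag e (\<lambda>i. norm (M $ i)) ** transpose V" .
  with oU oV e have "is_svd X U e (\<lambda>i. norm (M $ i)) V" by (simp add: is_svd_def)
  then show thesis by (rule that)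
qed

lemma matrix_mul_rdiag_left: "(rdiag e s ** M) $ i $ j = s i * M $ (e i) $ j"
proof -
  have "(rdiag e s ** M) $ i $ j = (\<Sum>k\<in>UNIV. (if k = e i then s i else 0) * M $ k $ j)"
    unfolding matrix_matrix_mult_def rdiag_def by simp
  also have "\<dots> = (\<Sum>k\<in>UNIV. if k = e i then s i * M $ k $ j else 0)"
    by (rule sum.cong) auto
  finally show ?thesis by simp
qed

lemma rdiag_mul_transpose:
  assumes "inj e"
  shows "rdiag e s ** transpose (rdiag e s) = diag_mat (\<lambda>i. (s i)^2)"
proof -
  have "(rdiag e s ** transpose (rdiag e s)) $ i $ j = s i * (if e i = e j then s j else 0)" for i j
    by (simp only: matrix_mul_rdiag_left) (simp add: transpose_def rdiag_def)
  then show ?thesis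
    using assms by (auto simp: vec_eq_iff diag_mat_def inj_def power2_eq_square)
qed

lemma is_svd_mul_transpose:
  assumes "is_svd X U e s V"
  shows "X ** transpose X = U ** diag_mat (\<lambda>i. (s i)^2) ** transpose U"
proof -
  have V: "transpose V ** V = mat 1" and X: "X = U ** rdiag e s ** transpose V" and e: "inj e"
    using assms by (auto simp: is_svd_def orthogonal_matrix_def)
  have "X ** transpose X = U ** rdiag e s ** (transpose V ** V) ** transpose (rdiag e s) ** transpose U"
    by (simp only: X matrix_transpose_mul transpose_transpose matrix_mul_assoc)
  also have "\<dots> = U ** (rdiag e s ** transpose (rdiag e s)) ** transpose U"
    by (simp only: V matrix_mul_rid matrix_mul_assoc)
  finally show ?thesis by (simp only: rdiag_mul_transpose[OF e])
qed

lemma trace_orthogonal_conj_diag_mat: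
  assumes "orthogonal_matrix U"
  shows "(\<Sum>a\<in>UNIV. (U ** diag_mat c ** transpose U) $ a $ a) = (\<Sum>i\<in>UNIV. c i)"
proof -
  have col: "(\<Sum>a\<in>UNIV. U $ a $ i * U $ a $ i) = 1" for i
  proof -
    have "transpose U ** U = mat 1" using assms by (simp add: orthogonal_matrix_def)
    from arg_cong[OF this, of "\<lambda>Z. Z $ i $ i"] show ?thesis
      by (simp add: matrix_matrix_mult_def transpose_def mat_def)
  qed
  have "(\<Sum>a\<in>UNIV. (U ** diag_mat c ** transpose U) $ a $ a)
      = (\<Sum>a\<in>UNIV. \<Sum>i\<in>UNIV. c i * (U $ a $ i * U $ a $ i))"
    unfolding matrix_matrix_mult_def[of "U ** diag_mat c" "transpose U"]
    by (simp add: matrix_mul_diag_mat_right transpose_def mult_ac)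
  also have "\<dots> = (\<Sum>i\<in>UNIV. c i * (\<Sum>a\<in>UNIV. U $ a $ i * U $ a $ i))"
    by (subst sum.swap) (simp add: sum_distrib_left)
  finally show ?thesis by (simp add: col)
qed

text \<open>U g(S^2) U^T is g applied to X X^T and hence independent of the chosen SVD: the orthogonal
  matrix P = U^T U' intertwines S^2 and S'^2 entrywise, hence also g(S^2) and g(S'^2).\<close>
lemma is_svd_spectral_function_unique:
  assumes A: "is_svd X U e s V" and B: "is_svd X U' e' s' V'"
  shows "U ** diag_mat (\<lambda>i. g ((s i)^2)) ** transpose U = U' ** diag_mat (\<lambda>i. g ((s' i)^2)) ** transpose U'"
proof -
  let ?D = "diag_mat (\<lambda>i. (s i)^2)" and ?D' = "diag_mat (\<lambda>i. (s' i)^2)"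
  let ?G = "diag_mat (\<lambda>i. g ((s i)^2))" and ?G' = "diag_mat (\<lambda>i. g ((s' i)^2))"
  have UtU: "transpose U ** U = mat 1" and UUt: "U ** transpose U = mat 1"
    and UtU': "transpose U' ** U' = mat 1" and UUt': "U' ** transpose U' = mat 1"
    using A B by (auto simp: is_svd_def orthogonal_matrix_def)
  have eq: "U ** ?D ** transpose U = U' ** ?D' ** transpose U'"
    using is_svd_mul_transpose[OF A] is_svd_mul_transpose[OF B] by metis
  define P where "P = transpose U ** U'"
  have "?D ** P = (transpose U ** U) ** ?D ** (transpose U ** U')"
    by (simp only: P_def UtU matrix_mul_lid)
  also have "\<dots> = transpose U ** (U ** ?D ** transpose U) ** U'"
    by (simp only: matrix_mul_assoc)
  also have "\<dots> = transpose U ** (U' ** ?D' ** transpose U') ** U'"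
    by (simp only: eq)
  also have "\<dots> = (transpose U ** U') ** ?D' ** (transpose U' ** U')"
    by (simp only: matrix_mul_assoc)
  also have "\<dots> = P ** ?D'" by (simp only: P_def UtU' matrix_mul_rid)
  finally have DP: "?D ** P = P ** ?D'" .
  have "(?G ** P) $ i $ j = (P ** ?G') $ i $ j" for i j
  proof -
    have "(s i)^2 * P $ i $ j = P $ i $ j * (s' j)^2"
      using arg_cong[OF DP, of "\<lambda>Z. Z $ i $ j"]
      by (simp add: matrix_mul_diag_mat_left matrix_mul_diag_mat_right)
    then have "P $ i $ j = 0 \<or> (s i)^2 = (s' j)^2" by auto
    then show ?thesis by (auto simp: matrix_mul_diag_mat_left matrix_mul_diag_mat_right)
  qed
  then have GP: "?G ** P = P ** ?G'" by (simp add: vec_eq_iff)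
  have U'eq: "U' = U ** P" by (simp only: P_def matrix_mul_assoc UUt matrix_mul_lid)
  have PPt: "P ** transpose P = mat 1"
  proof -
    have "P ** transpose P = transpose U ** (U' ** transpose U') ** U"
      by (simp only: P_def matrix_transpose_mul transpose_transpose matrix_mul_assoc)
    then show ?thesis by (simp only: UUt' matrix_mul_rid UtU)
  qed
  have "U' ** ?G' ** transpose U' = U ** (P ** ?G') ** transpose P ** transpose U"
    by (simp only: U'eq matrix_transpose_mul matrix_mul_assoc)
  also have "\<dots> = U ** ?G ** (P ** transpose P) ** transpose U"
    by (simp only: GP[symmetric] matrix_mul_assoc)
  also have "\<dots> = U ** ?G ** transpose U" by (simp only: PPt matrix_mul_rid)
  finally show ?thesis by simp
qed

lemma count_image_mset_UNIV:
  "real (count (image_mset f (mset_set (UNIV::'a::finite set))) x) = (\<Sum>i\<in>UNIV. if f i = x then 1 else 0)"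
proof -
  have "count (image_mset f (mset_set (UNIV::'a set))) x = card (f -` {x})"
    by (simp add: count_image_mset)
  then show ?thesis by (simp add: sum.If_cases vimage_def Collect_conv_if)
qed

lemma is_svd_singular_values_unique:
  assumes A: "is_svd X U e s V" and B: "is_svd X U' e' s' V'"
  shows "image_mset s (mset_set UNIV) = image_mset s' (mset_set UNIV)"
proof -
  have sq: "image_mset (\<lambda>i. (s i)^2) (mset_set UNIV) = image_mset (\<lambda>i. (s' i)^2) (mset_set UNIV)"
  proof (rule multiset_eqI)
    fix x
    let ?g = "\<lambda>t::real. if t = x then 1 else (0::real)"
    have "(\<Sum>i\<in>UNIV. ?g ((s i)^2))
        = (\<Sum>a\<in>UNIV. (U ** diag_mat (\<lambda>i. ?g ((s i)^2)) ** transpose U) $ a $ a)"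
      using A by (simp add: trace_orthogonal_conj_diag_mat is_svd_def)
    also have "\<dots> = (\<Sum>a\<in>UNIV. (U' ** diag_mat (\<lambda>i. ?g ((s' i)^2)) ** transpose U') $ a $ a)"
      by (simp only: is_svd_spectral_function_unique[OF A B, of ?g])
    also have "\<dots> = (\<Sum>i\<in>UNIV. ?g ((s' i)^2))"
      using B by (simp add: trace_orthogonal_conj_diag_mat is_svd_def)
    finally show "count (image_mset (\<lambda>i. (s i)^2) (mset_set UNIV)) x =
               count (image_mset (\<lambda>i. (s' i)^2) (mset_set UNIV)) x"
      by (simp only: count_image_mset_UNIV[symmetric] of_nat_eq_iff)
  qed
  have "\<forall>i. 0 \<le> s i" "\<forall>i. 0 \<le> s' i" using A B by (auto simp: is_svd_def)
  then have "image_mset s (mset_set UNIV) = image_mset sqrt (image_mset (\<lambda>i. (s i)^2) (mset_set UNIV))"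
    and "image_mset s' (mset_set UNIV) = image_mset sqrt (image_mset (\<lambda>i. (s' i)^2) (mset_set UNIV))"
    by (simp_all add: multiset.map_comp o_def)
  with sq show ?thesis by simp
qed

lemma sing_vals_is_svd:
  assumes "is_svd X U e s V"
  shows "sing_vals X = image_mset s (mset_set UNIV)"
  unfolding sing_vals_def
  by (rule the1_equality) (use assms is_svd_singular_values_unique in blast)+

section \<open>Hard thresholding\<close>

definition hard_threshold :: "real \<Rightarrow> real \<Rightarrow> real \<Rightarrow> real" where
  "hard_threshold c r x = (if r * \<bar>x\<bar> > c then x else 0)"

lemma trunc_ent_nth: "trunc_ent c r Y $ i $ j = hard_threshold c r (Y $ i $ j)"
  by (simp add: trunc_ent_def hard_threshold_def)

lemma is_svd_hard_threshold:
  assumes "is_svd X U e s V"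
  shows "is_svd (U ** rdiag e (\<lambda>i. hard_threshold c r (s i)) ** transpose V) U e
      (\<lambda>i. hard_threshold c r (s i)) V"
  using assms by (auto simp: is_svd_def hard_threshold_def)

lemma svd_hard_threshold_eq_projection:
  assumes A: "is_svd X U e s V"
  shows "U ** rdiag e (\<lambda>i. hard_threshold c r (s i)) ** transpose V =
    U ** diag_mat (\<lambda>i. (\<lambda>t. if r * sqrt t > c then 1 else 0) ((s i)^2)) ** transpose U ** X"
proof -
  let ?G = "diag_mat (\<lambda>i. (\<lambda>t. if r * sqrt t > c then 1 else 0) ((s i)^2))"
  have s0: "\<forall>i. 0 \<le> s i" and X: "X = U ** rdiag e s ** transpose V"
    and UtU: "transpose U ** U = mat 1"
    using A by (auto simp: is_svd_def orthogonal_matrix_def)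
  have R: "rdiag e (\<lambda>i. hard_threshold c r (s i)) = ?G ** rdiag e s"
    using s0 by (simp add: vec_eq_iff matrix_mul_diag_mat_left rdiag_def hard_threshold_def)
  have "U ** ?G ** transpose U ** X = U ** ?G ** (transpose U ** U) ** rdiag e s ** transpose V"
    by (simp only: X matrix_mul_assoc)
  also have "\<dots> = U ** (?G ** rdiag e s) ** transpose V"
    by (simp only: UtU matrix_mul_rid matrix_mul_assoc)
  finally show ?thesis by (simp only: R)
qed

lemma trunc_mat_is_svd:
  assumes A: "is_svd X U e s V"
  shows "trunc_mat c r X = U ** rdiag e (\<lambda>i. hard_threshold c r (s i)) ** transpose V"
proof -
  have s0: "\<forall>i. 0 \<le> s i" if "is_svd X U e s V" for U e s V using that by (simp add: is_svd_def)
  let ?T = "\<lambda>U e s V. U ** rdiag e (\<lambda>i. if r * s i > c then s i else 0) ** transpose V"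
  have T: "?T U e s V = U ** rdiag e (\<lambda>i. hard_threshold c r (s i)) ** transpose V"
    if "is_svd X U e s V" for U e s V using s0[OF that] by (simp add: hard_threshold_def)
  have unique: "?T U1 e1 s1 V1 = ?T U2 e2 s2 V2"
    if "is_svd X U1 e1 s1 V1" "is_svd X U2 e2 s2 V2" for U1 e1 s1 V1 U2 e2 s2 V2
    using is_svd_spectral_function_unique[OF that, of "\<lambda>t. if r * sqrt t > c then 1 else 0"]
    by (simp only: T[OF that(1)] T[OF that(2)] svd_hard_threshold_eq_projection[OF that(1)]
        svd_hard_threshold_eq_projection[OF that(2)])
  have "trunc_mat c r X = ?T U e s V"
    unfolding trunc_mat_def by (rule the1_equality) (use A unique in blast)+
  then show ?thesis by (simp only: T[OF A])
qed

lemma svd_form_entry: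
  "(U ** rdiag e c ** transpose V) $ a $ b = (\<Sum>i\<in>UNIV. U $ a $ i * c i * V $ b $ (e i))"
proof -
  have "(U ** rdiag e c ** transpose V) $ a $ b =
        (\<Sum>j\<in>UNIV. \<Sum>k\<in>UNIV. if j = e k then U $ a $ k * c k * V $ b $ j else 0)"
    by (simp add: matrix_matrix_mult_def rdiag_def transpose_def sum_distrib_right if_distrib
        if_distribR cong: if_cong)
  also have "\<dots> = (\<Sum>i\<in>UNIV. U $ a $ i * c i * V $ b $ (e i))"
    by (subst sum.swap) simp
  finally show ?thesis .
qed

lemma svd_form_diff:
  "U ** rdiag e a ** transpose V - U ** rdiag e b ** transpose V =
    U ** rdiag e (\<lambda>i. a i - b i) ** transpose V"
  by (simp add: vec_eq_iff svd_form_entry sum_subtractf[symmetric] algebra_simps)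

lemma norm_svd_form_le:
  fixes U :: "real^'n1^'n1" and V :: "real^'n2^'n2"
  assumes oU: "orthogonal_matrix U" and oV: "orthogonal_matrix V"
  shows "norm (U ** rdiag e c ** transpose V) \<le> (\<Sum>i\<in>UNIV. \<bar>c i\<bar>)"
proof -
  define R where "R = (\<lambda>i. (\<chi> a b. U $ a $ i * c i * V $ b $ (e i)) :: real^'n2^'n1)"
  have "U ** rdiag e c ** transpose V = (\<Sum>i\<in>UNIV. R i)"
    by (simp add: vec_eq_iff svd_form_entry R_def)
  moreover have "norm (R i) = \<bar>c i\<bar>" for i
  proof -
    have cu: "norm (column i U) = 1" and cv: "norm (column (e i) V) = 1"
      using oU oV by (auto simp: orthogonal_matrix_orthonormal_columns)
    have row: "R i $ a = (U $ a $ i * c i) *\<^sub>R column (e i) V" for a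
      by (simp add: R_def vec_eq_iff column_def)
    have "norm (R i) = L2_set (\<lambda>a. norm (R i $ a)) UNIV" by (simp add: norm_vec_def)
    also have "\<dots> = L2_set (\<lambda>a. \<bar>c i\<bar> * \<bar>U $ a $ i\<bar>) UNIV"
      by (simp add: row cv abs_mult mult.commute)
    also have "\<dots> = \<bar>c i\<bar> * norm (column i U)"
      by (simp add: L2_set_right_distrib norm_vec_def column_def)
    finally show ?thesis using cu by simp
  qed
  ultimately show ?thesis using norm_sum[of R UNIV] by simp
qed

lemma norm_le_sum_abs_entries:
  fixes Y :: "real^'n2^'n1"
  shows "norm Y \<le> (\<Sum>i\<in>UNIV. \<Sum>j\<in>UNIV. \<bar>Y $ i $ j\<bar>)"
proof -
  have "norm Y = L2_set (\<lambda>i. norm (Y $ i)) UNIV" by (simp add: norm_vec_def)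
  also have "\<dots> \<le> (\<Sum>i\<in>UNIV. norm (Y $ i))" by (rule L2_set_le_sum) simp
  also have "\<dots> \<le> (\<Sum>i\<in>UNIV. \<Sum>j\<in>UNIV. \<bar>Y $ i $ j\<bar>)"
    by (rule sum_mono) (rule norm_le_l1_cart)
  finally show ?thesis .
qed

lemma norm_sub_trunc_mat_le:
  assumes A: "is_svd X U e s V"
  shows "norm (X - trunc_mat c r X) \<le> (\<Sum>i\<in>UNIV. \<bar>s i - hard_threshold c r (s i)\<bar>)"
proof -
  have "X - trunc_mat c r X
      = U ** rdiag e s ** transpose V - U ** rdiag e (\<lambda>i. hard_threshold c r (s i)) ** transpose V"
    unfolding trunc_mat_is_svd[OF A] using A by (simp add: is_svd_def)
  also have "\<dots> = U ** rdiag e (\<lambda>i. s i - hard_threshold c r (s i)) ** transpose V"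
    by (rule svd_form_diff)
  finally have "X - trunc_mat c r X = \<dots>" .
  moreover have "orthogonal_matrix U" "orthogonal_matrix V" using A by (auto simp: is_svd_def)
  ultimately show ?thesis using norm_svd_form_le by simp
qed

lemma norm_sub_trunc_ent_le:
  "norm (Y - trunc_ent c r Y) \<le> (\<Sum>i\<in>UNIV. \<Sum>j\<in>UNIV. \<bar>Y $ i $ j - hard_threshold c r (Y $ i $ j)\<bar>)"
  using norm_le_sum_abs_entries[of "Y - trunc_ent c r Y"] by (simp add: trunc_ent_nth)

lemma rank_orthogonal_conj:
  fixes U :: "real^'n1^'n1" and V :: "real^'n2^'n2" and M :: "real^'n2^'n1"
  assumes oU: "orthogonal_matrix U" and oV: "orthogonal_matrix V"
  shows "rank (U ** M ** transpose V) = rank M"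
proof (rule antisym)
  show "rank (U ** M ** transpose V) \<le> rank M"
    by (meson order_trans rank_mul_le_left rank_mul_le_right)
  have UtU: "transpose U ** U = mat 1" and VtV: "transpose V ** V = mat 1"
    using oU oV by (auto simp: orthogonal_matrix_def)
  have "M = transpose U ** (U ** M ** transpose V) ** V"
    by (simp only: matrix_mul_assoc UtU matrix_mul_lid)
       (simp only: matrix_mul_assoc[symmetric] VtV matrix_mul_rid)
  then show "rank M \<le> rank (U ** M ** transpose V)"
    by (metis order_trans rank_mul_le_left rank_mul_le_right)
qed

lemma rank_rdiag:
  assumes e: "inj e"
  shows "rank (rdiag e s :: real^'n2^'n1) = card {i. s i \<noteq> 0}"
proof -
  let ?R = "rdiag e s :: real^'n2^'n1"
  let ?N = "{i. s i \<noteq> 0}"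
  let ?Rn = "(\<lambda>i. ?R $ i) ` ?N"
  have rows: "rows ?R = range (\<lambda>i. ?R $ i)" by (auto simp: rows_def row_def)
  have "?R $ i = 0" if "s i = 0" for i using that by (simp add: vec_eq_iff rdiag_def)
  then have "rows ?R \<subseteq> insert 0 ?Rn" "?Rn \<subseteq> rows ?R" by (auto simp: rows)
  then have "span (rows ?R) = span ?Rn"
    by (metis span_insert_0 span_mono subset_antisym)
  then have "rank ?R = dim ?Rn" by (metis row_rank_def dim_span)
  also have "\<dots> = card ?Rn"
  proof (rule dim_eq_card_independent)
    have inn: "inner (?R $ i) (?R $ j) = (if i = j then (s i)^2 else 0)" for i j
      using arg_cong[OF rdiag_mul_transpose[OF e, of s], of "\<lambda>Z. Z $ i $ j"]
      by (simp add: matrix_mul_transpose_entry diag_mat_def)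
    then have "pairwise orthogonal ?Rn"
      unfolding pairwise_def orthogonal_def by auto
    moreover have "0 \<notin> ?Rn"
      using inn by (auto simp del: inner_zero_left) (metis inner_zero_left power_not_zero)
    ultimately show "independent ?Rn" by (simp add: pairwise_orthogonal_independent)
  qed
  also have "\<dots> = card ?N"
  proof (rule card_image, rule inj_onI)
    fix i j assume "i \<in> ?N" "?R $ i = ?R $ j"
    then have "?R $ i $ e i = ?R $ j $ e i" by simp
    with \<open>i \<in> ?N\<close> e show "i = j" by (auto simp: rdiag_def inj_def split: if_splits)
  qed
  finally show ?thesis .
qed

lemma rank_is_svd:
  assumes "is_svd X U e s V"
  shows "rank X = card {i. s i \<noteq> 0}"
proof -
  have "orthogonal_matrix U" "orthogonal_matrix V" "inj e" "X = U ** rdiag e s ** transpose V"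
    using assms by (auto simp: is_svd_def)
  then show ?thesis by (simp only: rank_orthogonal_conj rank_rdiag)
qed

lemma nuc_norm_is_svd:
  assumes "is_svd X U e s V"
  shows "nuc_norm X = (\<Sum>i\<in>UNIV. s i)"
  by (simp add: nuc_norm_def sing_vals_is_svd[OF assms] sum_unfold_sum_mset)

section \<open>The penalty a - psi*(a)\<close>

lemma convex_on_above_left_tangent:
  fixes f :: "real \<Rightarrow> real"
  assumes cvx: "convex_on {a..b} f" and deriv: "(f has_real_derivative d) (at_left b)"
    and t: "t \<in> {a..b}"
  shows "f b - d * (b - t) \<le> f t"
proof (cases "t = b")
  case False
  with t have "t < b" by simp
  define k where "k = (f b - f t) / (b - t)"
  have k: "k * (b - t) = f b - f t" using \<open>t < b\<close> by (simp add: k_def)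
  have "((\<lambda>y. (f y - f b) / (y - b)) \<longlongrightarrow> d) (at_left b)"
    using deriv by (simp add: has_field_derivative_iff)
  moreover have "eventually (\<lambda>y. k \<le> (f y - f b) / (y - b)) (at_left b)"
    using eventually_at_left_real[OF \<open>t < b\<close>]
  proof eventually_elim
    case (elim y)
    have "convex_on {t..b} f" using t by (intro convex_on_subset[OF cvx]) auto
    with elim have "f y \<le> k * (y - t) + f t"
      using convex_onD_Icc'[of t b f y] by (simp add: k_def)
    moreover have "k * (y - t) = k * (y - b) + k * (b - t)" by (simp add: algebra_simps)
    ultimately have "f y - f b \<le> k * (y - b)" using k by linarith
    then show ?case using elim by (simp add: neg_le_divide_eq)
  qed
  ultimately have "k \<le> d" by (rule tendsto_lowerbound) simp
  then have "k * (b - t) \<le> d * (b - t)" using \<open>t < b\<close> by (simp add: mult_right_mono)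
  with k show ?thesis by simp
qed simp

lemma in_PhiD:
  assumes "in_Phi phi tstar"
  shows in_Phi_finite: "\<And>t. t \<in> {0..1} \<Longrightarrow> phi t = ereal (real_of_ereal (phi t))"
    and in_Phi_nonneg: "\<And>t. t \<in> {0..1} \<Longrightarrow> 0 \<le> real_of_ereal (phi t)"
    and in_Phi_one: "real_of_ereal (phi 1) = 1"
    and in_Phi_min: "real_of_ereal (phi tstar) = 0" "0 \<le> tstar" "tstar < 1"
    and in_Phi_convex: "convex_on {0..1} (\<lambda>t. real_of_ereal (phi t))"
proof -
  have P: "proper_fun phi" "{0..1} \<subseteq> interior {x. phi x \<noteq> \<infinity>}"
    "phi tstar = 0" "\<forall>t\<in>{0..1}. phi tstar \<le> phi t" "phi 1 = 1"
    using assms by (auto simp: in_Phi_def)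
  show fin: "phi t = ereal (real_of_ereal (phi t))" if "t \<in> {0..1}" for t
  proof -
    have "phi t \<noteq> \<infinity>" using P(2) that interior_subset by blast
    moreover have "phi t \<noteq> -\<infinity>" using P(1) by (simp add: proper_fun_def)
    ultimately show ?thesis by (cases "phi t") auto
  qed
  show "0 \<le> real_of_ereal (phi t)" if "t \<in> {0..1}" for t
    using P(3,4) that fin[OF that] by (metis ereal_less_eq(5))
  show "real_of_ereal (phi 1) = 1" "real_of_ereal (phi tstar) = 0" using P(3,5) by simp_all
  show "0 \<le> tstar" "tstar < 1" "convex_on {0..1} (\<lambda>t. real_of_ereal (phi t))"
    using assms by (auto simp: in_Phi_def)
qed

text \<open>Summing over a = rho sigma_i and a = rho |Y_ij| turns the nuclear-norm and l1 parts of the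
  surrogate objective, minus the conjugate terms, into sums of psi_penalty.\<close>
definition psi_penalty :: "(real \<Rightarrow> ereal) \<Rightarrow> real \<Rightarrow> real" where
  "psi_penalty phi a = a - real_of_ereal (psi_conj phi a)"

lemma psi_conj_le:
  assumes phi: "in_Phi phi tstar"
    and bound: "\<And>t. t \<in> {0..1} \<Longrightarrow> a * t - real_of_ereal (phi t) \<le> B"
  shows "psi_conj phi a \<le> ereal B"
  unfolding psi_conj_def
proof (rule SUP_least)
  fix t :: real
  show "ereal (a * t) - psi phi t \<le> ereal B"
  proof (cases "t \<in> {0..1}")
    case True
    then have "psi phi t = ereal (real_of_ereal (phi t))"
      using in_Phi_finite[OF phi True] by (simp add: psi_def)
    then show ?thesis using bound[OF True] by simp
  next
    case False
    then have "psi phi t = \<infinity>" unfolding psi_def by (simp only: if_False)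
    then show ?thesis by simp
  qed
qed

lemma psi_conj_ge:
  assumes phi: "in_Phi phi tstar" and t: "t \<in> {0..1}"
  shows "ereal (a * t - real_of_ereal (phi t)) \<le> psi_conj phi a"
proof -
  have "psi phi t = ereal (real_of_ereal (phi t))"
    using in_Phi_finite[OF phi t] t by (simp add: psi_def)
  then have "ereal (a * t - real_of_ereal (phi t)) = ereal (a * t) - psi phi t" by simp
  also have "\<dots> \<le> psi_conj phi a" unfolding psi_conj_def by (rule SUP_upper) simp
  finally show ?thesis .
qed

lemma psi_conj_eq_psi_penalty:
  assumes phi: "in_Phi phi tstar"
  shows "psi_conj phi a = ereal (a - psi_penalty phi a)"
proof -
  have "psi_conj phi a \<le> ereal \<bar>a\<bar>"
  proof (rule psi_conj_le[OF phi])
    fix t :: real assume t: "t \<in> {0..1}"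
    then have "a * t \<le> \<bar>a\<bar>"
      by (metis abs_ge_self abs_mult atLeastAtMost_iff abs_of_nonneg mult_left_le order_trans abs_ge_zero)
    then show "a * t - real_of_ereal (phi t) \<le> \<bar>a\<bar>" using in_Phi_nonneg[OF phi t] by simp
  qed
  moreover have "ereal (a * 1 - real_of_ereal (phi 1)) \<le> psi_conj phi a"
    by (rule psi_conj_ge[OF phi]) simp
  ultimately have "psi_conj phi a \<noteq> \<infinity>" "psi_conj phi a \<noteq> -\<infinity>" by auto
  then show ?thesis by (cases "psi_conj phi a") (auto simp: psi_penalty_def)
qed

lemma psi_penalty_zero:
  assumes phi: "in_Phi phi tstar"
  shows "psi_penalty phi 0 = 0"
proof -
  have "psi_conj phi 0 \<le> ereal 0"
    by (rule psi_conj_le[OF phi]) (use in_Phi_nonneg[OF phi] in simp)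
  moreover have "ereal (0 * tstar - real_of_ereal (phi tstar)) \<le> psi_conj phi 0"
    by (rule psi_conj_ge[OF phi]) (use in_Phi_min[OF phi] in simp)
  ultimately have "psi_conj phi 0 = 0" using in_Phi_min[OF phi] by (simp add: zero_ereal_def)
  then show ?thesis by (simp add: psi_penalty_def)
qed

lemma psi_penalty_le_one:
  assumes phi: "in_Phi phi tstar"
  shows "psi_penalty phi a \<le> 1"
  using psi_conj_ge[OF phi, of 1 a] psi_conj_eq_psi_penalty[OF phi, of a] in_Phi_one[OF phi]
  by simp

lemma sum_indicator_UNIV: "(\<Sum>i\<in>UNIV. if P i then 1 else 0) = real (card {i::'a::finite. P i})"
  by (simp add: sum.If_cases)

lemma psi_penalty_sum_le_card:
  assumes phi: "in_Phi phi tstar"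
  shows "(\<Sum>i\<in>UNIV. psi_penalty phi (r * \<bar>x i\<bar>)) \<le> real (card {i::'i::finite. x i \<noteq> 0})"
proof -
  have "(\<Sum>i\<in>UNIV. psi_penalty phi (r * \<bar>x i\<bar>)) \<le> (\<Sum>i\<in>UNIV. if x i \<noteq> 0 then 1 else 0)"
    by (intro sum_mono) (simp add: psi_penalty_zero[OF phi] psi_penalty_le_one[OF phi])
  then show ?thesis by (simp only: sum_indicator_UNIV)
qed

text \<open>Evaluate the subgradient inequality at the minimiser tstar, where phi vanishes, and use
  phi t0 \<ge> 0.\<close>
lemma subgradient_point_ge_minimiser:
  assumes phi: "in_Phi phi tstar"
    and t0: "0 \<le> t0" "t0 < 1" "1 / (1 - tstar) \<in> subdiff_psi phi t0"
  shows "tstar \<le> t0"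
proof -
  have ts: "tstar \<in> {0..1}" and t0i: "t0 \<in> {0..1}" using in_Phi_min[OF phi] t0 by auto
  have "psi phi t0 + ereal (1 / (1 - tstar) * (tstar - t0)) \<le> psi phi tstar"
    using t0(3) by (simp add: subdiff_psi_def)
  moreover have "psi phi tstar = ereal 0"
    using in_Phi_finite[OF phi ts] in_Phi_min[OF phi] ts by (simp add: psi_def)
  moreover have "psi phi t0 = ereal (real_of_ereal (phi t0))"
    using in_Phi_finite[OF phi t0i] t0i by (simp add: psi_def)
  ultimately have "real_of_ereal (phi t0) + 1 / (1 - tstar) * (tstar - t0) \<le> 0" by simp
  then have "1 / (1 - tstar) * (tstar - t0) \<le> 0" using in_Phi_nonneg[OF phi t0i] by simp
  then show ?thesis using in_Phi_min(3)[OF phi] by (auto simp: divide_le_0_iff)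
qed

context
  fixes phi :: "real \<Rightarrow> ereal" and tstar d :: real
  assumes phi: "in_Phi phi tstar"
    and dphi: "((\<lambda>t. real_of_ereal (phi t)) has_real_derivative d) (at_left 1)"
begin

lemma phi_above_tangent_at_one: "t \<in> {0..1} \<Longrightarrow> 1 - d * (1 - t) \<le> real_of_ereal (phi t)"
  using convex_on_above_left_tangent[OF in_Phi_convex[OF phi] dphi] in_Phi_one[OF phi] by simp

lemma left_derivative_at_one_bound: "1 \<le> d * (1 - tstar)"
  using phi_above_tangent_at_one[of tstar] in_Phi_min[OF phi] by simp

lemma left_derivative_at_one_pos: "0 < d"
proof (rule ccontr)
  assume "\<not> 0 < d"
  then have "d * (1 - tstar) \<le> 0" using in_Phi_min(3)[OF phi] by (simp add: mult_nonpos_nonneg)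
  with left_derivative_at_one_bound show False by simp
qed

text \<open>Bound a t - phi t using phi \<ge> 0 for t \<le> 1 - 1/d and the tangent of phi at 1 otherwise.\<close>
lemma psi_penalty_ge_min:
  assumes a: "0 \<le> a"
  shows "min 1 (a / d) \<le> psi_penalty phi a"
proof -
  have d: "0 < d" by (rule left_derivative_at_one_pos)
  have "psi_conj phi a \<le> ereal (a - min 1 (a / d))"
  proof (rule psi_conj_le[OF phi])
    fix t :: real assume t: "t \<in> {0..1}"
    have tg: "1 - d * (1 - t) \<le> real_of_ereal (phi t)" by (rule phi_above_tangent_at_one[OF t])
    have nn: "0 \<le> real_of_ereal (phi t)" by (rule in_Phi_nonneg[OF phi t])
    show "a * t - real_of_ereal (phi t) \<le> a - min 1 (a / d)"
    proof (cases "d \<le> a")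
      case True
      then have "min 1 (a / d) = 1" using d by simp
      moreover have "d * (1 - t) \<le> a * (1 - t)" using True t by (simp add: mult_right_mono)
      ultimately show ?thesis using tg by (simp add: algebra_simps)
    next
      case False
      then have m: "min 1 (a / d) = a / d" using d by simp
      show ?thesis
      proof (cases "t - 1 + 1 / d \<le> 0")
        case True
        then have "a * (t - 1 + 1 / d) \<le> 0" using a by (simp add: mult_nonneg_nonpos)
        then show ?thesis using nn m by (simp add: algebra_simps)
      next
        case F2: False
        have "a * (t - 1 + 1 / d) \<le> d * (t - 1 + 1 / d)"
          using F2 False by (intro mult_right_mono) auto
        also have "d * (t - 1 + 1 / d) = 1 - d * (1 - t)" using d by (simp add: field_simps)
        finally show ?thesis using tg m by (simp add: algebra_simps)
      qed
    qed
  qed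
  then show ?thesis using psi_conj_eq_psi_penalty[OF phi, of a] by simp
qed

lemma psi_penalty_eq_one:
  assumes "d \<le> a"
  shows "psi_penalty phi a = 1"
  using psi_penalty_ge_min[of a] psi_penalty_le_one[OF phi, of a] assms left_derivative_at_one_pos
  by simp

lemma psi_penalty_sum_hard_threshold:
  "(\<Sum>i\<in>UNIV. psi_penalty phi (r * \<bar>hard_threshold d r (x i)\<bar>))
    = real (card {i::'i::finite. hard_threshold d r (x i) \<noteq> 0})"
proof -
  have "psi_penalty phi (r * \<bar>hard_threshold d r (x i)\<bar>) = (if hard_threshold d r (x i) \<noteq> 0 then 1 else 0)" for i
    by (auto simp: hard_threshold_def psi_penalty_zero[OF phi] psi_penalty_eq_one)
  then show ?thesis by (simp only: sum_indicator_UNIV)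
qed

lemma psi_penalty_hard_threshold_gain:
  assumes "0 \<le> r"
  shows "r / d * \<bar>x - hard_threshold d r x\<bar>
    \<le> psi_penalty phi (r * \<bar>x\<bar>) - psi_penalty phi (r * \<bar>hard_threshold d r x\<bar>)"
proof (cases "r * \<bar>x\<bar> > d")
  case False
  have "0 < d" by (rule left_derivative_at_one_pos)
  with False have "r * \<bar>x\<bar> / d \<le> 1" by simp
  then have "r * \<bar>x\<bar> / d \<le> psi_penalty phi (r * \<bar>x\<bar>)"
    using psi_penalty_ge_min[of "r * \<bar>x\<bar>"] assms by simp
  with False show ?thesis by (simp add: hard_threshold_def psi_penalty_zero[OF phi])
qed (simp add: hard_threshold_def)

lemma psi_penalty_sum_hard_threshold_gain:
  assumes "0 \<le> r"
  shows "r / d * (\<Sum>i\<in>UNIV. \<bar>x i - hard_threshold d r (x i)\<bar>)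
    \<le> (\<Sum>i\<in>UNIV. psi_penalty phi (r * \<bar>x i\<bar>))
      - (\<Sum>i\<in>(UNIV::'i::finite set). psi_penalty phi (r * \<bar>hard_threshold d r (x i)\<bar>))"
  unfolding sum_distrib_left sum_subtractf[symmetric]
  by (intro sum_mono psi_penalty_hard_threshold_gain assms)

end

section \<open>Exact penalty\<close>

lemma argmin_on_cong:
  assumes "\<And>p. p \<in> S \<Longrightarrow> F p = G p"
  shows "argmin_on S F = argmin_on S G"
  using assms by (auto simp: argmin_on_def)

lemma argmin_on_eq_exact_penalty:
  fixes F G :: "'a \<Rightarrow> real"
  assumes le: "\<And>p. p \<in> S \<Longrightarrow> G p \<le> F p"
    and move: "\<And>p. p \<in> S \<Longrightarrow> \<exists>q\<in>S. G q = F q \<and> (q = p \<or> G q < G p)"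
  shows "argmin_on S (\<lambda>p. ereal (F p)) = argmin_on S (\<lambda>p. ereal (G p))"
proof
  show "argmin_on S (\<lambda>p. ereal (F p)) \<subseteq> argmin_on S (\<lambda>p. ereal (G p))"
  proof
    fix p assume p: "p \<in> argmin_on S (\<lambda>p. ereal (F p))"
    have "G p \<le> G p'" if "p' \<in> S" for p'
    proof -
      obtain q where q: "q \<in> S" "G q = F q" "G q \<le> G p'" using move[OF \<open>p' \<in> S\<close>] by force
      have "G p \<le> F p" using le p by (simp add: argmin_on_def)
      also have "\<dots> \<le> F q" using p q(1) by (simp add: argmin_on_def)
      finally show ?thesis using q by simp
    qed
    then show "p \<in> argmin_on S (\<lambda>p. ereal (G p))" using p by (simp add: argmin_on_def)
  qed
  show "argmin_on S (\<lambda>p. ereal (G p)) \<subseteq> argmin_on S (\<lambda>p. ereal (F p))"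
  proof
    fix p assume p: "p \<in> argmin_on S (\<lambda>p. ereal (G p))"
    then have "p \<in> S" by (simp add: argmin_on_def)
    then obtain q where q: "q \<in> S" "G q = F q" "q = p \<or> G q < G p" using move by blast
    with p have "F p = G p" by (auto simp: argmin_on_def not_less[symmetric])
    moreover have "G p \<le> F p'" if "p' \<in> S" for p'
      using p le[OF that] that by (fastforce simp: argmin_on_def)
    ultimately show "p \<in> argmin_on S (\<lambda>p. ereal (F p))"
      using \<open>p \<in> S\<close> by (simp add: argmin_on_def)
  qed
qed

definition rank_objective :: "real \<Rightarrow> real \<Rightarrow> ((real^'n2^'n1) \<times> (real^'n2^'n1) \<Rightarrow> ereal)
    \<Rightarrow> (real^'n2^'n1) \<times> (real^'n2^'n1) \<Rightarrow> real" where
  "rank_objective nu lam f = (\<lambda>(X, Y).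
      nu * real_of_ereal (f (X, Y)) + real (rank X) + lam * real (l0_norm Y))"

definition penalty_objective :: "(real \<Rightarrow> ereal) \<Rightarrow> real \<Rightarrow> real \<Rightarrow> real
    \<Rightarrow> ((real^'n2^'n1) \<times> (real^'n2^'n1) \<Rightarrow> ereal) \<Rightarrow> (real^'n2^'n1) \<times> (real^'n2^'n1) \<Rightarrow> real" where
  "penalty_objective phi nu lam rho f = (\<lambda>(X, Y). nu * real_of_ereal (f (X, Y))
      + (\<Sum>\<^sub># (image_mset (\<lambda>s. psi_penalty phi (rho * s)) (sing_vals X)))
      + lam * (\<Sum>i\<in>UNIV. \<Sum>j\<in>UNIV. psi_penalty phi (rho * \<bar>Y $ i $ j\<bar>)))"

lemma sum_sum_UNIV_pairs:
  "(\<Sum>i\<in>UNIV. \<Sum>j\<in>UNIV. g i j) = (\<Sum>p\<in>(UNIV::('a::finite \<times> 'b::finite) set). g (fst p) (snd p))"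
  by (simp add: sum.cartesian_product case_prod_beta UNIV_Times_UNIV[symmetric]
      del: UNIV_Times_UNIV)

lemma l0_norm_eq_card_pairs: "l0_norm Y = card {p. Y $ fst p $ snd p \<noteq> 0}"
  unfolding l0_norm_def by (rule arg_cong[where f=card]) auto

lemma penalty_objective_is_svd:
  assumes "is_svd X U e s V"
  shows "penalty_objective phi nu lam rho f (X, Y) = nu * real_of_ereal (f (X, Y))
      + (\<Sum>i\<in>UNIV. psi_penalty phi (rho * \<bar>s i\<bar>))
      + lam * (\<Sum>p\<in>UNIV. psi_penalty phi (rho * \<bar>Y $ fst p $ snd p\<bar>))"
proof -
  have "\<bar>s i\<bar> = s i" for i using assms by (simp add: is_svd_def)
  moreover have "(\<Sum>\<^sub># (image_mset (\<lambda>s. psi_penalty phi (rho * s)) (sing_vals X)))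
      = (\<Sum>i\<in>UNIV. psi_penalty phi (rho * s i))"
    by (simp add: sing_vals_is_svd[OF assms] multiset.map_comp o_def sum_unfold_sum_mset)
  ultimately show ?thesis by (simp add: penalty_objective_def sum_sum_UNIV_pairs)
qed

lemma argmin_on_rank_objective:
  assumes fin: "\<forall>p\<in>Omega. f p \<noteq> \<infinity> \<and> f p \<noteq> -\<infinity>"
  shows "argmin_on Omega (\<lambda>(X, Y). ereal nu * f (X, Y)
      + ereal (real (rank X) + lam * real (l0_norm Y)))
    = argmin_on Omega (\<lambda>p. ereal (rank_objective nu lam f p))"
proof (rule argmin_on_cong)
  fix p assume "p \<in> Omega"
  with fin show "(\<lambda>(X, Y). ereal nu * f (X, Y) + ereal (real (rank X) + lam * real (l0_norm Y))) p
      = ereal (rank_objective nu lam f p)"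
    by (cases p, cases "f p") (auto simp: rank_objective_def)
qed

lemma ereal_penalty_objective:
  fixes X Y :: "real^'n2^'n1"
  assumes dims: "CARD('n1) \<le> CARD('n2)" and phi: "in_Phi phi tstar"
    and fin: "f (X, Y) \<noteq> \<infinity>" "f (X, Y) \<noteq> -\<infinity>"
  shows "ereal nu * f (X, Y) + ereal (rho * nuc_norm X)
      - (\<Sum>\<^sub># (image_mset (\<lambda>s. psi_conj phi (rho * s)) (sing_vals X)))
      + ereal (rho * lam * l1_norm Y)
      - ereal lam * (\<Sum>i\<in>UNIV. \<Sum>j\<in>UNIV. psi_conj phi (rho * \<bar>Y $ i $ j\<bar>))
    = ereal (penalty_objective phi nu lam rho f (X, Y))"
proof -
  obtain U e s V where svd: "is_svd X U e s V" using svd_exists[OF dims] .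
  have "(\<Sum>\<^sub># (image_mset (\<lambda>s. psi_conj phi (rho * s)) (sing_vals X)))
      = (\<Sum>i\<in>UNIV. psi_conj phi (rho * s i))"
    by (simp add: sing_vals_is_svd[OF svd] multiset.map_comp o_def sum_unfold_sum_mset)
  also have "\<dots> = ereal (\<Sum>i\<in>UNIV. rho * s i - psi_penalty phi (rho * s i))"
    by (simp add: psi_conj_eq_psi_penalty[OF phi])
  moreover have "(\<Sum>i\<in>UNIV. \<Sum>j\<in>UNIV. psi_conj phi (rho * \<bar>Y $ i $ j\<bar>))
      = ereal (\<Sum>i\<in>UNIV. \<Sum>j\<in>UNIV. rho * \<bar>Y $ i $ j\<bar> - psi_penalty phi (rho * \<bar>Y $ i $ j\<bar>))"
    by (simp add: psi_conj_eq_psi_penalty[OF phi])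
  moreover have "\<bar>s i\<bar> = s i" for i using svd by (simp add: is_svd_def)
  ultimately show ?thesis
    using fin
    by (cases "f (X, Y)") (simp_all add: penalty_objective_is_svd[OF svd] nuc_norm_is_svd[OF svd]
        l1_norm_def sum_sum_UNIV_pairs sum_subtractf sum_distrib_left algebra_simps)
qed


lemma argmin_on_penalty_objective:
  fixes Omega :: "((real^'n2^'n1) \<times> (real^'n2^'n1)) set"
  assumes dims: "CARD('n1) \<le> CARD('n2)" and phi: "in_Phi phi tstar"
    and fin: "\<forall>p\<in>Omega. f p \<noteq> \<infinity> \<and> f p \<noteq> -\<infinity>"
  shows "argmin_on Omega (\<lambda>(X, Y). ereal nu * f (X, Y) + ereal (rho * nuc_norm X)
      - (\<Sum>\<^sub># (image_mset (\<lambda>s. psi_conj phi (rho * s)) (sing_vals X)))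
      + ereal (rho * lam * l1_norm Y)
      - ereal lam * (\<Sum>i\<in>UNIV. \<Sum>j\<in>UNIV. psi_conj phi (rho * \<bar>Y $ i $ j\<bar>)))
    = argmin_on Omega (\<lambda>p. ereal (penalty_objective phi nu lam rho f p))"
  by (rule argmin_on_cong) (use fin ereal_penalty_objective[OF dims phi] in fastforce)

lemma dist_hard_threshold_le:
  assumes "is_svd X U e s V"
  shows "dist (X, Y) (trunc_mat c r X, trunc_ent c r Y)
    \<le> (\<Sum>i\<in>UNIV. \<bar>s i - hard_threshold c r (s i)\<bar>)
      + (\<Sum>p\<in>UNIV. \<bar>Y $ fst p $ snd p - hard_threshold c r (Y $ fst p $ snd p)\<bar>)"
proof -
  have "dist (X, Y) (trunc_mat c r X, trunc_ent c r Y)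
      \<le> norm (X - trunc_mat c r X) + norm (Y - trunc_ent c r Y)"
    using norm_Pair_le by (simp add: dist_norm)
  also have "\<dots> \<le> (\<Sum>i\<in>UNIV. \<bar>s i - hard_threshold c r (s i)\<bar>)
      + (\<Sum>p\<in>UNIV. \<bar>Y $ fst p $ snd p - hard_threshold c r (Y $ fst p $ snd p)\<bar>)"
    using norm_sub_trunc_ent_le[of Y c r]
    by (intro add_mono norm_sub_trunc_mat_le[OF assms]) (simp only: sum_sum_UNIV_pairs)
  finally show ?thesis .
qed

lemma hard_threshold_fixed_point:
  assumes svd: "is_svd X U e s V"
    and zero: "(\<Sum>i\<in>UNIV. \<bar>s i - hard_threshold c r (s i)\<bar>)
      + (\<Sum>p\<in>UNIV. \<bar>Y $ fst p $ snd p - hard_threshold c r (Y $ fst p $ snd p)\<bar>) = 0"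
  shows "(trunc_mat c r X, trunc_ent c r Y) = (X, Y)"
proof -
  have "\<forall>i\<in>UNIV. \<bar>s i - hard_threshold c r (s i)\<bar> = 0"
    and "\<forall>p\<in>UNIV. \<bar>Y $ fst p $ snd p - hard_threshold c r (Y $ fst p $ snd p)\<bar> = 0"
    using zero by (simp_all add: add_nonneg_eq_0_iff sum_nonneg sum_nonneg_eq_0_iff)
  then have s: "(\<lambda>i. hard_threshold c r (s i)) = s"
    and "hard_threshold c r (Y $ i $ j) = Y $ i $ j" for i j
    by auto
  then have "trunc_ent c r Y = Y" by (simp add: vec_eq_iff trunc_ent_nth)
  moreover have "trunc_mat c r X = U ** rdiag e s ** transpose V"
    by (simp only: trunc_mat_is_svd[OF svd] s)
  moreover have "\<dots> = X" using svd by (simp add: is_svd_def)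
  ultimately show ?thesis by simp
qed

context
  fixes phi :: "real \<Rightarrow> ereal" and tstar d :: real
  assumes phi: "in_Phi phi tstar"
    and dphi: "((\<lambda>t. real_of_ereal (phi t)) has_real_derivative d) (at_left 1)"
begin

lemma penalty_objective_le_rank_objective:
  assumes svd: "is_svd X U e s V" and lam: "0 \<le> lam"
  shows "penalty_objective phi nu lam rho f (X, Y) \<le> rank_objective nu lam f (X, Y)"
proof -
  have "(\<Sum>i\<in>UNIV. psi_penalty phi (rho * \<bar>s i\<bar>)) \<le> real (rank X)"
    using psi_penalty_sum_le_card[OF phi] by (simp add: rank_is_svd[OF svd])
  moreover have "lam * (\<Sum>p\<in>UNIV. psi_penalty phi (rho * \<bar>Y $ fst p $ snd p\<bar>)) \<le> lam * real (l0_norm Y)"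
    using mult_left_mono[OF psi_penalty_sum_le_card[OF phi, of rho "\<lambda>p. Y $ fst p $ snd p"] lam]
    by (simp add: l0_norm_eq_card_pairs)
  ultimately show ?thesis
    by (simp add: penalty_objective_is_svd[OF svd] rank_objective_def)
qed

lemma penalty_objective_eq_rank_objective_hard_threshold:
  assumes svd: "is_svd X U e s V"
  shows "penalty_objective phi nu lam rho f (trunc_mat d rho X, trunc_ent d rho Y)
    = rank_objective nu lam f (trunc_mat d rho X, trunc_ent d rho Y)"
proof -
  let ?s = "\<lambda>i. hard_threshold d rho (s i)" and ?Y = "trunc_ent d rho Y"
  have svd': "is_svd (trunc_mat d rho X) U e ?s V"
    using is_svd_hard_threshold[OF svd] by (simp add: trunc_mat_is_svd[OF svd])
  have "(\<Sum>i\<in>UNIV. psi_penalty phi (rho * \<bar>?s i\<bar>)) = real (rank (trunc_mat d rho X))"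
    by (simp add: psi_penalty_sum_hard_threshold[OF phi dphi] rank_is_svd[OF svd'])
  moreover have "(\<Sum>p\<in>UNIV. psi_penalty phi (rho * \<bar>?Y $ fst p $ snd p\<bar>)) = real (l0_norm ?Y)"
    by (simp add: trunc_ent_nth psi_penalty_sum_hard_threshold[OF phi dphi] l0_norm_eq_card_pairs)
  ultimately show ?thesis
    by (simp add: penalty_objective_is_svd[OF svd'] rank_objective_def)
qed

lemma penalty_objective_hard_threshold_decrease:
  fixes X Y :: "real^'n2^'n1"
  assumes svd: "is_svd X U e s V" and rho: "0 \<le> rho" and lam: "0 \<le> lam"
  defines "q \<equiv> (trunc_mat d rho X, trunc_ent d rho Y)"
  shows "nu * (real_of_ereal (f (X, Y)) - real_of_ereal (f q))
      + rho * min 1 lam / d * ((\<Sum>i\<in>UNIV. \<bar>s i - hard_threshold d rho (s i)\<bar>)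
        + (\<Sum>p\<in>UNIV. \<bar>Y $ fst p $ snd p - hard_threshold d rho (Y $ fst p $ snd p)\<bar>))
    \<le> penalty_objective phi nu lam rho f (X, Y) - penalty_objective phi nu lam rho f q"
proof -
  let ?S1 = "\<Sum>i\<in>UNIV. \<bar>s i - hard_threshold d rho (s i)\<bar>"
  let ?S2 = "\<Sum>p\<in>UNIV. \<bar>Y $ fst p $ snd p - hard_threshold d rho (Y $ fst p $ snd p)\<bar>"
  let ?H = "\<lambda>x. psi_penalty phi (rho * \<bar>x\<bar>)"
  have "0 < d" by (rule left_derivative_at_one_pos[OF phi dphi])
  have svd': "is_svd (trunc_mat d rho X) U e (\<lambda>i. hard_threshold d rho (s i)) V"
    using is_svd_hard_threshold[OF svd] by (simp add: trunc_mat_is_svd[OF svd])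
  have gain1: "rho / d * ?S1
      \<le> (\<Sum>i\<in>UNIV. ?H (s i)) - (\<Sum>i\<in>UNIV. ?H (hard_threshold d rho (s i)))"
    by (rule psi_penalty_sum_hard_threshold_gain[OF phi dphi rho])
  have gain2: "lam * (rho / d * ?S2) \<le> lam * ((\<Sum>p\<in>UNIV. ?H (Y $ fst p $ snd p))
      - (\<Sum>p\<in>UNIV. ?H (hard_threshold d rho (Y $ fst p $ snd p))))"
    using psi_penalty_sum_hard_threshold_gain[OF phi dphi rho] lam by (rule mult_left_mono)
  have S1: "0 \<le> rho / d * ?S1" and S2: "0 \<le> rho / d * ?S2"
    using rho \<open>0 < d\<close> by (simp_all add: sum_nonneg)
  have "min 1 lam * (rho / d * ?S1) \<le> rho / d * ?S1"
    using mult_right_mono[OF min.cobounded1[of 1 lam] S1] by simp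
  moreover have "min 1 lam * (rho / d * ?S2) \<le> lam * (rho / d * ?S2)"
    using mult_right_mono[OF min.cobounded2[of 1 lam] S2] .
  moreover have "rho * min 1 lam / d * (?S1 + ?S2)
      = min 1 lam * (rho / d * ?S1) + min 1 lam * (rho / d * ?S2)"
    by (simp add: algebra_simps)
  ultimately have "rho * min 1 lam / d * (?S1 + ?S2) \<le> rho / d * ?S1 + lam * (rho / d * ?S2)"
    by linarith
  with gain1 gain2 show ?thesis
    by (simp add: q_def penalty_objective_is_svd[OF svd] penalty_objective_is_svd[OF svd']
        trunc_ent_nth algebra_simps)
qed

text \<open>Thresholding gains at least rho min(1, lam)/d per unit of removed mass in the penalty part,
  while f loses at most nu Lf per unit (the removed mass bounds the distance moved); so the
  objective drops strictly unless no mass is removed.\<close>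
lemma penalty_objective_hard_threshold_step:
  assumes svd: "is_svd X U e s V" and rho: "0 < rho" and nu: "0 \<le> nu" and lam: "0 \<le> lam"
    and gap: "nu * Lf < rho * min 1 lam / d"
    and lip: "lipschitz_on Lf Omega (\<lambda>p. real_of_ereal (f p))"
    and p: "(X, Y) \<in> Omega" and q: "(trunc_mat d rho X, trunc_ent d rho Y) \<in> Omega"
  shows "(trunc_mat d rho X, trunc_ent d rho Y) = (X, Y)
    \<or> penalty_objective phi nu lam rho f (trunc_mat d rho X, trunc_ent d rho Y)
      < penalty_objective phi nu lam rho f (X, Y)"
proof -
  let ?q = "(trunc_mat d rho X, trunc_ent d rho Y)"
  let ?S = "(\<Sum>i\<in>UNIV. \<bar>s i - hard_threshold d rho (s i)\<bar>)
      + (\<Sum>p\<in>UNIV. \<bar>Y $ fst p $ snd p - hard_threshold d rho (Y $ fst p $ snd p)\<bar>)"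
  have "\<bar>real_of_ereal (f (X, Y)) - real_of_ereal (f ?q)\<bar> \<le> Lf * dist (X, Y) ?q"
    using lipschitz_onD[OF lip p q] by (simp add: dist_real_def)
  also have "\<dots> \<le> Lf * ?S"
    using dist_hard_threshold_le[OF svd] lipschitz_on_nonneg[OF lip] by (rule mult_left_mono)
  finally have "- (nu * Lf * ?S) \<le> nu * (real_of_ereal (f (X, Y)) - real_of_ereal (f ?q))"
    using nu by (smt (verit) abs_le_D2 mult.assoc mult_left_mono mult_minus_right)
  then have decrease: "(rho * min 1 lam / d - nu * Lf) * ?S
      \<le> penalty_objective phi nu lam rho f (X, Y) - penalty_objective phi nu lam rho f ?q"
    using penalty_objective_hard_threshold_decrease[OF svd less_imp_le[OF rho] lam, of nu f Y]
    by (simp add: algebra_simps)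
  have S0: "0 \<le> ?S" by (simp add: sum_nonneg)
  show ?thesis
  proof (cases "?S = 0")
    case True
    then show ?thesis using hard_threshold_fixed_point[OF svd] by blast
  next
    case False
    with S0 have "0 < ?S" by linarith
    with gap have "0 < (rho * min 1 lam / d - nu * Lf) * ?S" by simp
    with decrease show ?thesis by simp
  qed
qed

lemma exact_penalty_parameter_bound:
  assumes t0: "tstar \<le> t0" "t0 < 1" and nu: "0 < nu" and lam: "0 < lam" and Lf: "0 \<le> Lf"
    and rho: "rho > d * (1 - tstar) * nu * Lf / (min 1 lam * (1 - t0))"
  shows "0 < rho" and "nu * Lf < rho * min 1 lam / d"
proof -
  have d: "0 < d" by (rule left_derivative_at_one_pos[OF phi dphi])
  have m: "0 < min 1 lam" using lam by simp
  have K: "0 \<le> d * nu * Lf / min 1 lam" using d nu Lf m by simp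
  have "d * nu * Lf / min 1 lam * 1 \<le> d * nu * Lf / min 1 lam * ((1 - tstar) / (1 - t0))"
    using K t0 by (intro mult_left_mono) auto
  also have "\<dots> = d * (1 - tstar) * nu * Lf / (min 1 lam * (1 - t0))" by (simp add: field_simps)
  finally have "d * nu * Lf / min 1 lam < rho" using rho by simp
  with K show "0 < rho" by linarith
  from \<open>d * nu * Lf / min 1 lam < rho\<close> have "d * (nu * Lf) < rho * min 1 lam"
    using m by (simp add: pos_divide_less_eq mult_ac)
  with d show "nu * Lf < rho * min 1 lam / d" by (simp add: pos_less_divide_eq mult_ac)
qed

end

theorem corollary5p2:
  fixes phi :: "real \<Rightarrow> ereal" and tstar t0 d :: real
    and f :: "(real^'n2^'n1) \<times> (real^'n2^'n1) \<Rightarrow> ereal"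
    and Omega :: "((real^'n2^'n1) \<times> (real^'n2^'n1)) set"
    and nu lam Lf rho :: real
  assumes dims: "CARD('n1) \<le> CARD('n2)"
    and phi: "in_Phi phi tstar"
    and dphi: "((\<lambda>t. real_of_ereal (phi t)) has_real_derivative d) (at_left 1)"
    and t0: "0 \<le> t0" "t0 < 1" "1 / (1 - tstar) \<in> subdiff_psi phi t0"
    and nu: "nu > 0" and lam: "lam > 0"
    and f_proper: "proper_fun f" and f_lsc: "lsc_fun f"
    and Omega_closed: "closed Omega"
    and f_fin: "\<forall>p\<in>Omega. f p \<noteq> \<infinity>"
    and f_lip: "lipschitz_on Lf Omega (\<lambda>p. real_of_ereal (f p))"
    and trunc: "\<forall>X Y r. (X, Y) \<in> Omega \<and> r > 0 \<longrightarrow>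
                  (trunc_mat d r X, trunc_ent d r Y) \<in> Omega"
    and nonempty: "argmin_on Omega (\<lambda>(X, Y). ereal nu * f (X, Y)
                      + ereal (real (rank X) + lam * real (l0_norm Y))) \<noteq> {}"
    and rho: "rho > d * (1 - tstar) * nu * Lf / (min 1 lam * (1 - t0))"
  shows "argmin_on Omega (\<lambda>(X, Y). ereal nu * f (X, Y)
                      + ereal (real (rank X) + lam * real (l0_norm Y)))
       = argmin_on Omega (\<lambda>(X, Y). ereal nu * f (X, Y) + ereal (rho * nuc_norm X)
                      - (\<Sum>\<^sub># (image_mset (\<lambda>s. psi_conj phi (rho * s)) (sing_vals X)))
                      + ereal (rho * lam * l1_norm Y)
                      - ereal lam * (\<Sum>i\<in>UNIV. \<Sum>j\<in>UNIV. psi_conj phi (rho * \<bar>Y $ i $ j\<bar>)))"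
proof -
  let ?F = "rank_objective nu lam f" and ?G = "penalty_objective phi nu lam rho f"
  have fin: "\<forall>p\<in>Omega. f p \<noteq> \<infinity> \<and> f p \<noteq> -\<infinity>"
    using f_fin f_proper unfolding proper_fun_def by blast
  have "0 < rho" and gap: "nu * Lf < rho * min 1 lam / d"
    using exact_penalty_parameter_bound[OF phi dphi subgradient_point_ge_minimiser[OF phi t0]
        t0(2) nu lam lipschitz_on_nonneg[OF f_lip] rho] by auto
  have "argmin_on Omega (\<lambda>p. ereal (?F p)) = argmin_on Omega (\<lambda>p. ereal (?G p))"
  proof (rule argmin_on_eq_exact_penalty)
    fix p assume "p \<in> Omega"
    obtain X Y where p: "p = (X, Y)" by fastforce
    obtain U e s V where svd: "is_svd X U e s V" using svd_exists[OF dims] .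
    show "?G p \<le> ?F p"
      unfolding p using penalty_objective_le_rank_objective[OF phi dphi svd] lam by simp
    let ?q = "(trunc_mat d rho X, trunc_ent d rho Y)"
    have "?q \<in> Omega" using trunc \<open>p \<in> Omega\<close> \<open>0 < rho\<close> by (simp add: p)
    moreover have "?G ?q = ?F ?q"
      by (rule penalty_objective_eq_rank_objective_hard_threshold[OF phi dphi svd])
    moreover have "?q = p \<or> ?G ?q < ?G p"
      using penalty_objective_hard_threshold_step[OF phi dphi svd \<open>0 < rho\<close> _ _ gap f_lip]
        nu lam \<open>p \<in> Omega\<close> \<open>?q \<in> Omega\<close> by (simp add: p)
    ultimately show "\<exists>q\<in>Omega. ?G q = ?F q \<and> (q = p \<or> ?G q < ?G p)" by blast
  qed
  then show ?thesis
    by (simp only: argmin_on_rank_objective[OF fin] argmin_on_penalty_objective[OF dims phi fin])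
qed

end
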